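(* For every $8$-uniform hypergraph $H=(V,E)$ with $m=|E|$, \[100\,\tau(H) \le 10.2854\,n_1 + 16.0254\,n_2 + 17.3256\,n_3 + 17.7171\,n_{\ge 4} + 17.7171\,m.\]
   Context: A hypergraph $H=(V,E)$ consists of a finite vertex set $V$ and a finite collection $E$ of subsets of $V$ (edges); it is $k$-uniform if every edge has exactly $k$ vertices. The degree of a vertex $v$ is the number of edges containing $v$. For $i\ge 1$, $n_i$ denotes the number of vertices of degree exactly $i$, and $n_{\ge i}=\sum_{j\ge i} n_j$. A transversal is a vertex set meeting every edge; $\tau(H)$ is the minimum size of a transversal. *)

theory Defs
  imports Complex_Main "HOL-Library.Multiset"
begin

definition hypergraph :: "'a set \<Rightarrow> 'a set multiset \<Rightarrow> bool" where
  "hypergraph V E \<longleftrightarrow> finite V \<and> (\<forall>e\<in>#E. e \<subseteq> V)"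

definition uniform :: "nat \<Rightarrow> 'a set multiset \<Rightarrow> bool" where
  "uniform k E \<longleftrightarrow> (\<forall>e\<in>#E. card e = k)"

definition degree :: "'a set multiset \<Rightarrow> 'a \<Rightarrow> nat" where
  "degree E v = size (filter_mset (\<lambda>e. v \<in> e) E)"

definition n_deg :: "'a set \<Rightarrow> 'a set multiset \<Rightarrow> nat \<Rightarrow> nat" where
  "n_deg V E i = card {v \<in> V. degree E v = i}"

definition n_deg_ge :: "'a set \<Rightarrow> 'a set multiset \<Rightarrow> nat \<Rightarrow> nat" where
  "n_deg_ge V E i = card {v \<in> V. degree E v \<ge> i}"

definition is_transversal :: "'a set \<Rightarrow> 'a set multiset \<Rightarrow> 'a set \<Rightarrow> bool" where
  "is_transversal V E T \<longleftrightarrow> T \<subseteq> V \<and> (\<forall>e\<in>#E. T \<inter> e \<noteq> {})"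

definition tau :: "'a set \<Rightarrow> 'a set multiset \<Rightarrow> nat" where
  "tau V E = Min (card ` {T. is_transversal V E T})"

end

theory Submission
  imports Defs
begin

text \<open>We prove the stronger bound \<open>100 \<tau> \<le> \<Phi>\<close> for the potential
  \<open>\<Phi> = \<Sum>\<^sub>v w(deg v) + c m\<close> by induction on \<open>m\<close>, deleting vertices together with their edges.
  Since the weight \<open>w\<close> has non-increasing increments and every vertex meets the deleted vertex
  \<open>v\<close> of maximum degree \<open>D\<close> in at most its own degree many edges, deleting \<open>v\<close> lowers \<open>\<Phi>\<close> by at
  least \<open>c D + w(D) + 7D (w(D) - w(D - 1))\<close>, which is at least 100 unless \<open>D \<in> {3, 4}\<close>.
  For \<open>D \<in> {3, 4}\<close> the strict concavity of \<open>w\<close> yields an extra gain whenever a neighbour of a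
  maximum-degree vertex has smaller degree or shares two edges with it. If there is no such
  neighbour, the \<open>7D\<close> neighbours of \<open>v\<close> all have degree \<open>D\<close> and share exactly one edge with \<open>v\<close>.
  Either some edge joins this neighbourhood to an outside vertex \<open>w\<close>, and deleting \<open>v\<close> and then \<open>w\<close>
  gains 200, or the remaining edges meeting the neighbourhood form a \<open>(D - 1)\<close>-regular 8-uniform
  hypergraph on \<open>7D\<close> vertices, impossible since 8 does not divide \<open>7D(D - 1)\<close>.\<close>

definition codegree :: "'a set multiset \<Rightarrow> 'a \<Rightarrow> 'a \<Rightarrow> nat" where
  "codegree E x y = size (filter_mset (\<lambda>e. x \<in> e \<and> y \<in> e) E)"

abbreviation delete_vertices :: "'a set \<Rightarrow> 'a set multiset \<Rightarrow> 'a set multiset" where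
  "delete_vertices S E \<equiv> filter_mset (\<lambda>e. e \<inter> S = {}) E"

abbreviation delete_vertex :: "'a \<Rightarrow> 'a set multiset \<Rightarrow> 'a set multiset" where
  "delete_vertex v E \<equiv> filter_mset (\<lambda>e. v \<notin> e) E"

lemma delete_vertices_singleton: "delete_vertices {v} E = delete_vertex v E"
  by (rule filter_mset_cong) auto

lemma size_filter_mset_partition:
  "size (filter_mset P M) + size (filter_mset (\<lambda>x. \<not> P x) M) = size M"
  by (induction M) auto

lemma degree_eq_degree_delete_vertex_plus_codegree:
  "degree E u = degree (delete_vertex v E) u + codegree E v u"
proof -
  have "size (filter_mset (\<lambda>e. u \<in> e) E)
      = size (filter_mset (\<lambda>e. v \<notin> e) (filter_mset (\<lambda>e. u \<in> e) E))
      + size (filter_mset (\<lambda>e. \<not> v \<notin> e) (filter_mset (\<lambda>e. u \<in> e) E))"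
    by (rule size_filter_mset_partition[symmetric])
  then show ?thesis by (simp add: degree_def codegree_def filter_filter_mset conj_commute)
qed

lemma degree_delete_vertex: "degree (delete_vertex v E) u = degree E u - codegree E v u"
  using degree_eq_degree_delete_vertex_plus_codegree[of E u v] by simp

lemma codegree_le_degree: "codegree E v u \<le> degree E u"
  using degree_eq_degree_delete_vertex_plus_codegree[of E u v] by simp

lemma degree_delete_vertex_self: "degree (delete_vertex v E) v = 0"
  by (simp add: degree_def filter_filter_mset)

lemma degree_filter_mset_le: "degree (filter_mset P E) u \<le> degree E u"
proof -
  have "filter_mset (\<lambda>e. u \<in> e) (filter_mset P E) \<subseteq># filter_mset (\<lambda>e. u \<in> e) E"
    by (rule multiset_filter_mono[OF multiset_filter_subset])
  then show ?thesis unfolding degree_def by (rule size_mset_mono)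
qed

lemma codegree_pos: "e \<in># E \<Longrightarrow> x \<in> e \<Longrightarrow> y \<in> e \<Longrightarrow> 0 < codegree E x y"
  unfolding codegree_def nonempty_has_size[symmetric] by auto

lemma size_eq_size_delete_vertex_plus_degree: "size E = size (delete_vertex v E) + degree E v"
  using size_filter_mset_partition[of "\<lambda>e. v \<notin> e" E] by (simp add: degree_def)

lemma sum_degree_uniform:
  assumes "finite V" "\<forall>e\<in>#E. e \<subseteq> V" "uniform k E"
  shows "(\<Sum>u\<in>V. degree E u) = k * size E"
  using assms(2,3)
proof (induction E)
  case empty
  then show ?case by (simp add: degree_def)
next
  case (add e E)
  have "degree (add_mset e E) u = degree E u + (if u \<in> e then 1 else 0)" for u
    by (simp add: degree_def)
  then have "(\<Sum>u\<in>V. degree (add_mset e E) u) = (\<Sum>u\<in>V. degree E u) + card (V \<inter> e)"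
    using assms(1) by (simp add: sum.distrib sum.If_cases)
  moreover have "V \<inter> e = e" "card e = k" using add.prems by (auto simp: uniform_def)
  ultimately show ?case using add by (simp add: uniform_def)
qed

lemma sum_codegree_uniform:
  assumes "hypergraph V E" "uniform k E" "v \<in> V"
  shows "(\<Sum>u\<in>V-{v}. codegree E v u) = (k - 1) * degree E v"
proof -
  have codegree: "codegree E v u = degree (filter_mset (\<lambda>e. v \<in> e) E) u" for u
    by (simp add: codegree_def degree_def filter_filter_mset)
  have "(\<Sum>u\<in>V. codegree E v u) = k * degree E v"
    unfolding codegree using assms
    by (subst sum_degree_uniform) (auto simp: hypergraph_def uniform_def degree_def)
  moreover have "(\<Sum>u\<in>V. codegree E v u) = degree E v + (\<Sum>u\<in>V-{v}. codegree E v u)"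
    using assms by (simp add: hypergraph_def sum.remove codegree degree_def filter_filter_mset)
  ultimately show ?thesis by (simp add: diff_mult_distrib)
qed

lemma uniform_regular_dvd:
  assumes "finite N" "\<forall>e\<in>#F. e \<subseteq> N" "uniform k F" "\<forall>y\<in>N. degree F y = r"
  shows "k dvd card N * r"
proof -
  have "card N * r = k * size F"
    using sum_degree_uniform[OF assms(1-3)] assms(4) by simp
  then show ?thesis by simp
qed

lemma transversal_vertex_set: "hypergraph V E \<Longrightarrow> \<forall>e\<in>#E. e \<noteq> {} \<Longrightarrow> is_transversal V E V"
  by (auto simp: is_transversal_def hypergraph_def Int_absorb1)

lemma finite_transversal_cards: "hypergraph V E \<Longrightarrow> finite (card ` {T. is_transversal V E T})"
  by (rule finite_imageI, rule finite_subset[of _ "Pow V"])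
     (auto simp: is_transversal_def hypergraph_def)

lemma tau_le_card: "hypergraph V E \<Longrightarrow> is_transversal V E T \<Longrightarrow> tau V E \<le> card T"
  unfolding tau_def using finite_transversal_cards by (intro Min_le) auto

lemma tau_attained:
  assumes "hypergraph V E" "\<forall>e\<in>#E. e \<noteq> {}"
  obtains T where "is_transversal V E T" "card T = tau V E"
proof -
  have "tau V E \<in> card ` {T. is_transversal V E T}"
    unfolding tau_def using finite_transversal_cards[OF assms(1)] transversal_vertex_set[OF assms]
    by (intro Min_in) auto
  then show ?thesis using that by auto
qed

lemma tau_le_tau_delete_vertices:
  assumes "hypergraph V E" "\<forall>e\<in>#E. e \<noteq> {}" "S \<subseteq> V"
  shows "tau V E \<le> tau V (delete_vertices S E) + card S"
proof -
  have "hypergraph V (delete_vertices S E)" "\<forall>e\<in>#delete_vertices S E. e \<noteq> {}"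
    using assms(1,2) by (auto simp: hypergraph_def)
  then obtain T where
    T: "is_transversal V (delete_vertices S E) T" "card T = tau V (delete_vertices S E)"
    by (rule tau_attained)
  have "is_transversal V E (T \<union> S)" using T(1) assms(3) by (auto simp: is_transversal_def)
  then have "tau V E \<le> card (T \<union> S)" by (rule tau_le_card[OF assms(1)])
  also have "\<dots> \<le> card T + card S" by (rule card_Un_le)
  finally show ?thesis using T(2) by simp
qed

definition weight :: "nat \<Rightarrow> real" where
  "weight d = (if d = 0 then 0 else if d = 1 then 10.2854 else if d = 2 then 16.0254
     else if d = 3 then 17.3256 else 17.7171)"

definition edge_weight :: real where
  "edge_weight = 17.7171"

definition increment :: "nat \<Rightarrow> real" where
  "increment D = weight D - weight (D - 1)"

definition concavity_gap :: "nat \<Rightarrow> real" where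
  "concavity_gap D = increment (D - 1) - increment D"

definition base_drop :: "nat \<Rightarrow> real" where
  "base_drop D = edge_weight * real D + weight D + 7 * real D * increment D"

lemma weight_mono: "a \<le> b \<Longrightarrow> weight a \<le> weight b"
  by (auto simp: weight_def)

lemma weight_nonneg: "0 \<le> weight d"
  by (auto simp: weight_def)

lemma weight_0: "weight 0 = 0"
  by (simp add: weight_def)

lemma weight_diff_ge_increment:
  assumes "1 \<le> D" "d \<le> D" "t \<le> d"
  shows "real t * increment D \<le> weight d - weight (d - t)"
proof (cases "D \<le> 4")
  case True
  then have "D = 1 \<or> D = 2 \<or> D = 3 \<or> D = 4" "d = 0 \<or> d = 1 \<or> d = 2 \<or> d = 3 \<or> d = 4"
    "t = 0 \<or> t = 1 \<or> t = 2 \<or> t = 3 \<or> t = 4" using assms by arith+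
  then show ?thesis using assms by (elim disjE) (simp_all add: weight_def increment_def)
next
  case False
  then have "increment D = 0" by (auto simp: increment_def weight_def)
  then show ?thesis using weight_mono[of "d - t" d] by simp
qed

lemma weight_diff_ge_increment_plus_gap:
  assumes "D \<in> {3, 4}" "d \<le> D" "1 \<le> t" "t \<le> d" "d < D \<or> 2 \<le> t"
  shows "real t * increment D + concavity_gap D \<le> weight d - weight (d - t)"
proof -
  have "D = 3 \<or> D = 4" "d = 1 \<or> d = 2 \<or> d = 3 \<or> d = 4" "t = 1 \<or> t = 2 \<or> t = 3 \<or> t = 4"
    using assms by auto
  then show ?thesis using assms
    by (elim disjE) (simp_all add: weight_def increment_def concavity_gap_def)
qed

lemma base_drop_ge_100:
  assumes "1 \<le> D" "D \<notin> {3, 4}"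
  shows "100 \<le> base_drop D"
proof (cases "D \<le> 2")
  case True
  then have "D = 1 \<or> D = 2" using assms by auto
  then show ?thesis by (auto simp: base_drop_def edge_weight_def weight_def increment_def)
next
  case False
  then have "5 \<le> D" using assms by auto
  then have "edge_weight * 5 \<le> edge_weight * real D" by (simp add: edge_weight_def)
  then show ?thesis using \<open>5 \<le> D\<close>
    by (simp add: base_drop_def edge_weight_def weight_def increment_def)
qed

lemma base_drop_plus_gap_ge_100: "D \<in> {3, 4} \<Longrightarrow> 100 \<le> base_drop D + concavity_gap D"
  by (auto simp: base_drop_def concavity_gap_def edge_weight_def weight_def increment_def)

lemma two_base_drops_plus_gap_ge_200: "D \<in> {3, 4} \<Longrightarrow> 200 \<le> 2 * base_drop D + concavity_gap D"
  by (auto simp: base_drop_def concavity_gap_def edge_weight_def weight_def increment_def)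

definition potential :: "'a set \<Rightarrow> 'a set multiset \<Rightarrow> real" where
  "potential V E = (\<Sum>u\<in>V. weight (degree E u)) + edge_weight * real (size E)"

lemma potential_drop_eq:
  assumes "hypergraph V E" "uniform 8 E" "v \<in> V" "degree E v = D"
  shows "potential V E - potential V (delete_vertex v E) = base_drop D
    + (\<Sum>u\<in>V-{v}. weight (degree E u) - weight (degree E u - codegree E v u)
                   - real (codegree E v u) * increment D)"
proof -
  have fin: "finite V" using assms(1) by (simp add: hypergraph_def)
  have codegrees: "(\<Sum>u\<in>V-{v}. real (codegree E v u)) = 7 * real D"
    using sum_codegree_uniform[OF assms(1-3)] assms(4) by (simp flip: of_nat_sum)
  have "potential V E - potential V (delete_vertex v E)
      = (\<Sum>u\<in>V. weight (degree E u) - weight (degree (delete_vertex v E) u)) + edge_weight * real D"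
    using size_eq_size_delete_vertex_plus_degree[of E v] assms(4)
    by (simp add: potential_def sum_subtractf algebra_simps)
  also have "(\<Sum>u\<in>V. weight (degree E u) - weight (degree (delete_vertex v E) u))
      = weight D + (\<Sum>u\<in>V-{v}. weight (degree E u) - weight (degree E u - codegree E v u))"
    using assms(4) sum.remove[OF fin assms(3),
        of "\<lambda>u. weight (degree E u) - weight (degree (delete_vertex v E) u)"]
    by (simp add: degree_delete_vertex_self weight_0 degree_delete_vertex[of v E])
  also have "(\<Sum>u\<in>V-{v}. weight (degree E u) - weight (degree E u - codegree E v u))
      = (\<Sum>u\<in>V-{v}. weight (degree E u) - weight (degree E u - codegree E v u)
                   - real (codegree E v u) * increment D) + 7 * real D * increment D"
    using codegrees by (simp add: sum_subtractf flip: sum_distrib_right)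
  finally show ?thesis by (simp add: base_drop_def)
qed

lemma potential_drop_ge_base_drop:
  assumes "hypergraph V E" "uniform 8 E" "\<forall>u\<in>V. degree E u \<le> D" "v \<in> V" "degree E v = D"
    "1 \<le> D"
  shows "base_drop D \<le> potential V E - potential V (delete_vertex v E)"
proof -
  have "real (codegree E v u) * increment D \<le> weight (degree E u) - weight (degree E u - codegree E v u)"
    if "u \<in> V" for u
    using weight_diff_ge_increment[OF assms(6) _ codegree_le_degree[of E v u]] assms(3) that by simp
  then have "0 \<le> (\<Sum>u\<in>V-{v}. weight (degree E u) - weight (degree E u - codegree E v u)
                           - real (codegree E v u) * increment D)"
    by (intro sum_nonneg) auto
  then show ?thesis using potential_drop_eq[OF assms(1,2,4,5)] by simp
qed

text \<open>Deleting \<open>x\<close> lowers the weight of a slack neighbour \<open>y\<close> by at least \<open>concavity_gap D\<close>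
  more than the linear bound \<open>codegree E x y * increment D\<close>.\<close>
definition slack_neighbour :: "'a set multiset \<Rightarrow> nat \<Rightarrow> 'a \<Rightarrow> 'a \<Rightarrow> bool" where
  "slack_neighbour E D x y \<longleftrightarrow>
     x \<noteq> y \<and> 0 < codegree E x y \<and> (degree E y < D \<or> 2 \<le> codegree E x y)"

lemma potential_drop_ge_with_slack:
  assumes "hypergraph V E" "uniform 8 E" "\<forall>u\<in>V. degree E u \<le> D" "v \<in> V" "degree E v = D"
    "D \<in> {3, 4}" "y \<in> V" "slack_neighbour E D v y"
  shows "base_drop D + concavity_gap D \<le> potential V E - potential V (delete_vertex v E)"
proof -
  define excess where "excess u = weight (degree E u) - weight (degree E u - codegree E v u)
                                   - real (codegree E v u) * increment D" for u
  have "1 \<le> D" using assms(6) by auto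
  have "0 \<le> excess u" if "u \<in> V" for u
    using weight_diff_ge_increment[OF \<open>1 \<le> D\<close> _ codegree_le_degree[of E v u]] assms(3) that
    by (simp add: excess_def)
  moreover have "concavity_gap D \<le> excess y"
  proof -
    have y: "degree E y \<le> D" "1 \<le> codegree E v y" "degree E y < D \<or> 2 \<le> codegree E v y"
      using assms(3,7,8) by (auto simp: slack_neighbour_def)
    show ?thesis
      using weight_diff_ge_increment_plus_gap[OF assms(6) y(1,2) codegree_le_degree y(3)]
      unfolding excess_def by linarith
  qed
  moreover have "finite V" "y \<in> V - {v}"
    using assms(1,7,8) by (auto simp: hypergraph_def slack_neighbour_def)
  ultimately have "excess y \<le> sum excess (V - {v})"
    by (intro member_le_sum) auto
  moreover have "potential V E - potential V (delete_vertex v E) = base_drop D + sum excess (V - {v})"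
    unfolding excess_def by (rule potential_drop_eq[OF assms(1,2,4,5)])
  ultimately show ?thesis using \<open>concavity_gap D \<le> excess y\<close> by linarith
qed

lemma slack_neighbour_after_deleting_vertex:
  assumes hyp: "hypergraph V E" and unif: "uniform 8 E" and D: "D \<in> {3, 4}"
    and max: "\<forall>u\<in>V. degree E u \<le> D" and v: "v \<in> V" "degree E v = D"
    and no_slack: "\<forall>x\<in>V. \<forall>y\<in>V. degree E x = D \<longrightarrow> \<not> slack_neighbour E D x y"
  obtains w y where "w \<in> V" "degree (delete_vertex v E) w = D" "y \<in> V" "w \<noteq> v"
    "slack_neighbour (delete_vertex v E) D w y"
proof -
  have fin: "finite V" using hyp by (simp add: hypergraph_def)
  define N where "N = {y \<in> V - {v}. 0 < codegree E v y}"
  have N_props: "codegree E v y = 1 \<and> degree E y = D" if "y \<in> N" for y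
  proof -
    have "y \<in> V" "v \<noteq> y" "0 < codegree E v y" using that by (auto simp: N_def)
    moreover have "\<not> slack_neighbour E D v y" using no_slack v \<open>y \<in> V\<close> by blast
    ultimately have "D \<le> degree E y" "codegree E v y = 1"
      unfolding slack_neighbour_def by auto
    moreover have "degree E y \<le> D" using max \<open>y \<in> V\<close> by blast
    ultimately show ?thesis by simp
  qed
  have "(\<Sum>y\<in>V-{v}. codegree E v y) = (\<Sum>y\<in>V-{v}. if y \<in> N then 1 else 0)"
    using N_props by (intro sum.cong) (auto simp: N_def)
  also have "\<dots> = card {y \<in> V-{v}. y \<in> N}"
    using fin by (simp flip: sum.inter_filter)
  also have "{y \<in> V-{v}. y \<in> N} = N" by (auto simp: N_def)
  finally have card_N: "card N = 7 * D"
    using sum_codegree_uniform[OF hyp unif v(1)] v(2) by simp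
  have degree_N: "degree (delete_vertex v E) y = D - 1" if "y \<in> N" for y
    using N_props[OF that] by (simp add: degree_delete_vertex)
  show ?thesis
  proof (cases "\<exists>e y w. e \<in># delete_vertex v E \<and> y \<in> e \<and> y \<in> N \<and> w \<in> e \<and> w \<notin> N")
    case True
    then obtain e y w where e: "e \<in># delete_vertex v E" "y \<in> e" "y \<in> N" "w \<in> e" "w \<notin> N"
      by blast
    have w: "w \<in> V" "w \<noteq> v" using e hyp by (auto simp: hypergraph_def)
    have y: "y \<in> V" "degree E y = D" using e(3) N_props[OF e(3)] by (auto simp: N_def)
    have "0 < codegree E y w" "y \<noteq> w" using e by (auto intro: codegree_pos[of e])
    moreover have "\<not> slack_neighbour E D y w" using no_slack y w(1) by blast
    ultimately have "D \<le> degree E w" unfolding slack_neighbour_def by auto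
    then have "degree E w = D" using max w(1) by (simp add: le_antisym)
    moreover have "codegree E v w = 0" using e(5) w by (simp add: N_def)
    ultimately have "degree (delete_vertex v E) w = D" by (simp add: degree_delete_vertex)
    moreover have "slack_neighbour (delete_vertex v E) D w y"
      using codegree_pos[OF e(1,4,2)] degree_N[OF e(3)] D e(3,5)
      by (auto simp: slack_neighbour_def)
    ultimately show ?thesis using that w y(1) by blast
  next
    case False
    define F where "F = filter_mset (\<lambda>e. e \<inter> N \<noteq> {}) (delete_vertex v E)"
    have "\<forall>e\<in>#F. e \<subseteq> N" using False by (auto simp: F_def)
    moreover have "uniform 8 F" using unif by (auto simp: F_def uniform_def)
    moreover have "degree F y = D - 1" if "y \<in> N" for y
    proof -
      have "filter_mset (\<lambda>e. y \<in> e) F = filter_mset (\<lambda>e. y \<in> e) (delete_vertex v E)"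
        unfolding F_def filter_filter_mset using that by (intro filter_mset_cong) auto
      then show ?thesis using degree_N[OF that] by (simp add: degree_def)
    qed
    moreover have "finite N" using fin by (simp add: N_def)
    ultimately have "8 dvd card N * (D - 1)" by (intro uniform_regular_dvd) auto
    then show ?thesis using card_N D by auto
  qed
qed

lemma exists_profitable_deletion:
  assumes hyp: "hypergraph V E" and unif: "uniform 8 E" and "E \<noteq> {#}"
  shows "\<exists>S\<subseteq>V. size (delete_vertices S E) < size E
           \<and> 100 * real (card S) \<le> potential V E - potential V (delete_vertices S E)"
proof -
  have fin: "finite V" using hyp by (simp add: hypergraph_def)
  obtain e where e: "e \<in># E" using \<open>E \<noteq> {#}\<close> by blast
  then have "e \<subseteq> V" "e \<noteq> {}" using hyp unif by (auto simp: hypergraph_def uniform_def)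
  then obtain x where x: "x \<in> V" "0 < degree E x"
    using e by (auto simp: degree_def nonempty_has_size[symmetric])
  define D where "D = Max (degree E ` V)"
  have max: "\<forall>u\<in>V. degree E u \<le> D" using fin by (simp add: D_def)
  have "D \<in> degree E ` V" unfolding D_def using fin x(1) by (intro Max_in) auto
  then obtain v where v: "v \<in> V" "degree E v = D" by blast
  have "1 \<le> D" using max x by fastforce
  have single: ?thesis if "u \<in> V" "degree E u = D"
    "100 \<le> potential V E - potential V (delete_vertex u E)" for u
    using that size_eq_size_delete_vertex_plus_degree[of E u] \<open>1 \<le> D\<close>
    by (intro exI[of _ "{u}"]) (simp add: delete_vertices_singleton)
  consider "D \<notin> {3, 4}"
    | "D \<in> {3, 4}" "\<exists>x\<in>V. \<exists>y\<in>V. degree E x = D \<and> slack_neighbour E D x y"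
    | "D \<in> {3, 4}" "\<forall>x\<in>V. \<forall>y\<in>V. degree E x = D \<longrightarrow> \<not> slack_neighbour E D x y"
    by blast
  then show ?thesis
  proof cases
    case 1
    then have "100 \<le> base_drop D" by (rule base_drop_ge_100[OF \<open>1 \<le> D\<close>])
    then show ?thesis
      using potential_drop_ge_base_drop[OF hyp unif max v \<open>1 \<le> D\<close>]
      by (intro single[OF v]) linarith
  next
    case 2
    then obtain x y where x: "x \<in> V" "degree E x = D" and "y \<in> V" "slack_neighbour E D x y"
      by blast
    then have "base_drop D + concavity_gap D \<le> potential V E - potential V (delete_vertex x E)"
      by (intro potential_drop_ge_with_slack[OF hyp unif max x 2(1)])
    then show ?thesis
      using base_drop_plus_gap_ge_100[OF 2(1)] by (intro single[OF x]) linarith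
  next
    case 3
    define E' where "E' = delete_vertex v E"
    obtain w y where w: "w \<in> V" "degree E' w = D" "y \<in> V" "w \<noteq> v" "slack_neighbour E' D w y"
      using slack_neighbour_after_deleting_vertex[OF hyp unif 3(1) max v 3(2)] unfolding E'_def .
    have hyp': "hypergraph V E'" and unif': "uniform 8 E'"
      using hyp unif by (auto simp: E'_def hypergraph_def uniform_def)
    have max': "\<forall>u\<in>V. degree E' u \<le> D"
      using max degree_filter_mset_le unfolding E'_def by (meson order_trans)
    have "base_drop D \<le> potential V E - potential V E'"
      using potential_drop_ge_base_drop[OF hyp unif max v \<open>1 \<le> D\<close>] by (simp add: E'_def)
    moreover have "base_drop D + concavity_gap D \<le> potential V E' - potential V (delete_vertex w E')"
      by (rule potential_drop_ge_with_slack[OF hyp' unif' max' w(1,2) 3(1) w(3,5)])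
    moreover have "delete_vertices {v, w} E = delete_vertex w E'"
      by (simp add: E'_def filter_filter_mset conj_commute)
    moreover have "size (delete_vertex w E') < size E"
      using size_eq_size_delete_vertex_plus_degree[of E v] v(2) \<open>1 \<le> D\<close>
        size_filter_mset_lesseq[of "\<lambda>e. w \<notin> e" E'] unfolding E'_def by linarith
    ultimately show ?thesis
      using two_base_drops_plus_gap_ge_200[OF 3(1)] v(1) w(1,4)
      by (intro exI[of _ "{v, w}"]) simp
  qed
qed

lemma tau_le_potential:
  assumes "hypergraph V E" "uniform 8 E"
  shows "100 * real (tau V E) \<le> potential V E"
  using assms
proof (induction "size E" arbitrary: E rule: less_induct)
  case less
  show ?case
  proof (cases "E = {#}")
    case True
    then have "tau V E = 0"
      using tau_le_card[OF less.prems(1), of "{}"] by (simp add: is_transversal_def)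
    moreover have "0 \<le> potential V E"
      by (simp add: potential_def edge_weight_def sum_nonneg weight_nonneg)
    ultimately show ?thesis by simp
  next
    case False
    then obtain S where S: "S \<subseteq> V" "size (delete_vertices S E) < size E"
      "100 * real (card S) \<le> potential V E - potential V (delete_vertices S E)"
      using exists_profitable_deletion[OF less.prems] by blast
    have "100 * real (tau V (delete_vertices S E)) \<le> potential V (delete_vertices S E)"
      using less.hyps[OF S(2)] less.prems by (simp add: hypergraph_def uniform_def)
    moreover have "tau V E \<le> tau V (delete_vertices S E) + card S"
      using less.prems by (intro tau_le_tau_delete_vertices S(1)) (auto simp: uniform_def)
    ultimately show ?thesis using S(3) by linarith
  qed
qed

lemma potential_eq_degree_counts:
  assumes "finite V"
  shows "potential V E =
      10.2854 * real (n_deg V E 1) + 16.0254 * real (n_deg V E 2)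
    + 17.3256 * real (n_deg V E 3) + 17.7171 * real (n_deg_ge V E 4)
    + 17.7171 * real (size E)"
proof -
  have count: "(\<Sum>u\<in>V. if P u then 1 else 0) = real (card {u \<in> V. P u})" for P
    using assms by (simp flip: sum.inter_filter)
  have weight: "weight d = 10.2854 * (if d = 1 then 1 else 0) + 16.0254 * (if d = 2 then 1 else 0)
      + 17.3256 * (if d = 3 then 1 else 0) + 17.7171 * (if 4 \<le> d then 1 else 0)" for d
    by (simp add: weight_def)
  have "(\<Sum>u\<in>V. weight (degree E u)) =
      10.2854 * (\<Sum>u\<in>V. if degree E u = 1 then 1 else 0)
    + 16.0254 * (\<Sum>u\<in>V. if degree E u = 2 then 1 else 0)
    + 17.3256 * (\<Sum>u\<in>V. if degree E u = 3 then 1 else 0)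
    + 17.7171 * (\<Sum>u\<in>V. if 4 \<le> degree E u then 1 else 0)"
    unfolding weight by (simp add: sum.distrib sum_distrib_left)
  then show ?thesis
    unfolding potential_def edge_weight_def n_deg_def n_deg_ge_def count by simp
qed

theorem mainTheorem4:
  fixes V :: "'a set" and E :: "'a set multiset"
  assumes "hypergraph V E" and "uniform 8 E"
  shows "100 * real (tau V E) \<le>
      10.2854 * real (n_deg V E 1) + 16.0254 * real (n_deg V E 2)
    + 17.3256 * real (n_deg V E 3) + 17.7171 * real (n_deg_ge V E 4)
    + 17.7171 * real (size E)"
  using tau_le_potential[OF assms] potential_eq_degree_counts[of V E] assms(1)
  by (simp add: hypergraph_def)

end
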